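(* Let $\pi\subseteq\mathbb R^2\rtimes\mathrm{GL}_2(\mathbb R)$ be generated by $a=\left(\begin{bmatrix}1\\0\end{bmatrix},I_2\right)$ and $b=\left(\begin{bmatrix}0\\ 1/2\end{bmatrix},\begin{bmatrix}-1&0\\0&1\end{bmatrix}\right)$, so $\pi\backslash\mathbb R^2$ is the Klein bottle. The map $\tilde f:\mathbb R^2\to F_2(\mathbb R^2,\pi)$, $(t_1,t_2)\mapsto\bigl((0,\tfrac{t_2}{2}),(0,\tfrac{t_2}{2}-\tfrac14)\bigr)$ induces a well-defined affine $2$-valued map $f$ on $\pi\backslash\mathbb R^2$; its Nielsen number is $N(f)=1$, and $f$ has exactly one fixed point. Moreover, there is no subgroup $N\subseteq\pi\cap\mathbb R^2$ of finite index in $\pi$ such that $f$ lifts to a $2$-valued map on the torus $N\backslash\mathbb R^2$; equivalently, for every such $N$ the induced homomorphism $f_*=(\phi_1,\phi_2;\sigma):\pi\to\pi^2\rtimes S_2$ does not satisfy $f_*(N)\subseteq N^2\rtimes S_2$.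
   Context: $\pi$ acts on $\mathbb R^2$ by $(a,A)x=a+Ax$; $p:\mathbb R^2\to\pi\backslash\mathbb R^2$ is the universal cover. $F_2(\mathbb R^2,\pi)=\{(x_1,x_2):p(x_1)\ne p(x_2)\}$, and $\tilde f$ induces the $2$-valued map $f(p(x))=\{p(\tilde f_1(x)),p(\tilde f_2(x))\}$. The induced homomorphism $f_*=(\phi_1,\phi_2;\sigma)$ is defined by $\tilde f_i\circ\gamma=\phi_i(\gamma)\circ\tilde f_{\sigma_\gamma^{-1}(i)}$ for $\gamma\in\pi$. $N(f)$ is the Nielsen number (number of essential fixed point classes) of the $2$-valued map $f$. *)

theory Defs
  imports "HOL-Analysis.Analysis" "HOL-Homology.Homology" "HOL-Algebra.Coset"
begin

type_synonym pt = "real^2"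
type_synonym aff = "(real^2) \<times> (real^2^2)"

definition act :: "aff \<Rightarrow> pt \<Rightarrow> pt" where
  "act g x = fst g + snd g *v x"

definition acomp :: "aff \<Rightarrow> aff \<Rightarrow> aff" where
  "acomp g h = (fst g + snd g *v fst h, snd g ** snd h)"

definition ainv :: "aff \<Rightarrow> aff" where
  "ainv g = (- (matrix_inv (snd g) *v fst g), matrix_inv (snd g))"

definition aone :: aff where "aone = (0, mat 1)"

definition gen_a :: aff where
  "gen_a = (vector [1, 0], mat 1)"

definition gen_b :: aff where
  "gen_b = (vector [0, 1/2], vector [vector [-1, 0], vector [0, 1]])"

inductive_set piK :: "aff set" where
  one: "aone \<in> piK"
| ma: "g \<in> piK \<Longrightarrow> acomp g gen_a \<in> piK"
| mai: "g \<in> piK \<Longrightarrow> acomp g (ainv gen_a) \<in> piK"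
| mb: "g \<in> piK \<Longrightarrow> acomp g gen_b \<in> piK"
| mbi: "g \<in> piK \<Longrightarrow> acomp g (ainv gen_b) \<in> piK"

definition piG :: "aff monoid" where
  "piG = \<lparr>carrier = piK, mult = acomp, one = aone\<rparr>"

definition piTrans :: "aff set" where
  "piTrans = {g \<in> piK. snd g = mat 1}"

text \<open>p(x): the orbit of x, a point of pi\R^2.\<close>
definition orb :: "pt \<Rightarrow> pt set" where
  "orb x = (\<lambda>g. act g x) ` piK"

definition klein :: "pt set set" where
  "klein = range orb"

text \<open>The lift F (components F 1, F 2) maps into F_2(R^2,pi).\<close>
definition in_F2 :: "(nat \<Rightarrow> pt \<Rightarrow> pt) \<Rightarrow> bool" where
  "in_F2 F \<longleftrightarrow> (\<forall>x. orb (F 1 x) \<noteq> orb (F 2 x))"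

text \<open>f_*(gamma) = (phi_1(gamma), phi_2(gamma); sigma_gamma):
  F_i o gamma = phi_i(gamma) o F_{sigma^{-1}(i)}.\<close>
definition induced :: "(nat \<Rightarrow> pt \<Rightarrow> pt) \<Rightarrow> aff \<Rightarrow> (nat \<Rightarrow> aff) \<Rightarrow> (nat \<Rightarrow> nat) \<Rightarrow> bool" where
  "induced F \<gamma> \<phi> \<sigma> \<longleftrightarrow> \<sigma> permutes {1,2} \<and> (\<forall>i\<in>{1,2}. \<phi> i \<in> piK) \<and>
     (\<forall>i\<in>{1,2}. \<forall>x. F i (act \<gamma> x) = act (\<phi> i) (F (inv_into UNIV \<sigma> i) x))"

definition wd_2valued :: "(nat \<Rightarrow> pt \<Rightarrow> pt) \<Rightarrow> bool" where
  "wd_2valued F \<longleftrightarrow> (\<forall>i\<in>{1,2}. continuous_on UNIV (F i)) \<and> in_F2 F \<and>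
     (\<forall>\<gamma>\<in>piK. \<exists>\<phi> \<sigma>. induced F \<gamma> \<phi> \<sigma>)"

definition mv :: "(nat \<Rightarrow> pt \<Rightarrow> pt) \<Rightarrow> pt set \<Rightarrow> pt set set" where
  "mv F q = (SOME S. \<exists>x. q = orb x \<and> S = {orb (F 1 x), orb (F 2 x)})"

definition fixpts :: "(nat \<Rightarrow> pt \<Rightarrow> pt) \<Rightarrow> pt set set" where
  "fixpts F = {q \<in> klein. q \<in> mv F q}"

text \<open>Local fixed point index of an isolated fixed point x0 of g : R^2 \<rightarrow> R^2:
  the Brouwer degree of (x - g x)/|x - g x| on small circles around x0.\<close>
definition isolated_fp :: "(pt \<Rightarrow> pt) \<Rightarrow> pt \<Rightarrow> bool" where
  "isolated_fp g x0 \<longleftrightarrow> g x0 = x0 \<and> (\<exists>e>0. \<forall>y. dist y x0 < e \<and> g y = y \<longrightarrow> y = x0)"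

definition circ_map :: "(pt \<Rightarrow> pt) \<Rightarrow> pt \<Rightarrow> real \<Rightarrow> (nat \<Rightarrow> real) \<Rightarrow> nat \<Rightarrow> real" where
  "circ_map g x0 r u = (let y = x0 + r *\<^sub>R vector [u 0, u 1]; w = y - g y in
      (\<lambda>k. if k = 0 then w$1 / norm w else if k = 1 then w$2 / norm w else 0))"

definition fp_index :: "(pt \<Rightarrow> pt) \<Rightarrow> pt \<Rightarrow> int" where
  "fp_index g x0 = (THE d. \<exists>e>0. \<forall>r. 0 < r \<and> r < e \<longrightarrow> Brouwer_degree2 1 (circ_map g x0 r) = d)"

definition liftFix :: "(nat \<Rightarrow> pt \<Rightarrow> pt) \<Rightarrow> aff \<Rightarrow> nat \<Rightarrow> pt set" where
  "liftFix F \<gamma> i = {x. act \<gamma> (F i x) = x}"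

definition fp_classes :: "(nat \<Rightarrow> pt \<Rightarrow> pt) \<Rightarrow> pt set set set" where
  "fp_classes F = {orb ` liftFix F \<gamma> i | \<gamma> i. \<gamma> \<in> piK \<and> i \<in> {1,2}} - {{}}"

text \<open>Index of a class (defined here for classes made of finitely many isolated fixed points):
  the sum of the local indices of its fixed points.\<close>
definition essential :: "(nat \<Rightarrow> pt \<Rightarrow> pt) \<Rightarrow> pt set set \<Rightarrow> bool" where
  "essential F C \<longleftrightarrow> (\<exists>\<gamma>\<in>piK. \<exists>i\<in>{1,2}. C = orb ` liftFix F \<gamma> i \<and> finite C \<and>
      (\<forall>x\<in>liftFix F \<gamma> i. isolated_fp (\<lambda>y. act \<gamma> (F i y)) x) \<and>
      (\<Sum>q\<in>C. fp_index (\<lambda>y. act \<gamma> (F i y)) (SOME x. x \<in> liftFix F \<gamma> i \<and> orb x = q)) \<noteq> 0)"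

definition nielsen :: "(nat \<Rightarrow> pt \<Rightarrow> pt) \<Rightarrow> nat" where
  "nielsen F = card {C \<in> fp_classes F. essential F C}"

definition ftilde :: "nat \<Rightarrow> pt \<Rightarrow> pt" where
  "ftilde i t = (if i = 1 then vector [0, t$2 / 2] else vector [0, t$2 / 2 - 1/4])"

end

theory Submission
  imports Defs
begin

text \<open>Write the elements of \<open>\<pi>\<close> as \<open>a\<^sup>m b\<^sup>n\<close>. The lift is equivariant: \<open>b\<^sup>2\<^sup>k\<close> acts on both
  branches as \<open>b\<^sup>k\<close> and \<open>b\<^sup>2\<^sup>k\<^sup>+\<^sup>1\<close> swaps them, so \<open>f\<close> is a well-defined 2-valued map.
  A coincidence \<open>x \<in> p(\<gamma> F\<^sub>i x)\<close> forces \<open>x\<close> into the orbit of \<open>0\<close>, so \<open>p(0)\<close> is the only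
  fixed point and all fixed point classes agree; its index is the degree of the displacement
  \<open>y \<mapsto> (y\<^sub>1, y\<^sub>2/2)\<close>, which is \<open>\<plusminus>1\<close>, so \<open>N(f) = 1\<close>. A subgroup \<open>N\<close> of finite index
  contains some \<open>b\<^sup>2\<^sup>k\<close> with \<open>k > 0\<close>; if \<open>f\<^sub>*(N) \<subseteq> N\<^sup>2 \<rtimes> S\<^sub>2\<close> then \<open>\<phi>\<^sub>1(b\<^sup>2\<^sup>k) = b\<^sup>k \<in> N\<close>,
  and \<open>N \<subseteq> \<real>\<^sup>2\<close> makes \<open>k\<close> even: an infinite descent.\<close>

lemma vec2_eq_iff: "(x::'a^2) = y \<longleftrightarrow> x$1 = y$1 \<and> x$2 = y$2"
  by (simp add: vec_eq_iff forall_2)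

lemma mat2_eq_iff:
  "(A::'a^2^2) = B \<longleftrightarrow> A$1$1 = B$1$1 \<and> A$1$2 = B$1$2 \<and> A$2$1 = B$2$1 \<and> A$2$2 = B$2$2"
  by (auto simp: vec_eq_iff forall_2)

lemma matrix_inv_unique:
  fixes A :: "'a::semiring_1^'n^'m" and B :: "'a^'m^'n"
  assumes "A ** B = mat 1" "B ** A = mat 1"
  shows "matrix_inv A = B"
proof -
  have inv: "A ** matrix_inv A = mat 1 \<and> matrix_inv A ** A = mat 1"
    unfolding matrix_inv_def by (rule someI[of _ B]) (use assms in blast)
  have "matrix_inv A = (matrix_inv A ** A) ** B"
    by (simp flip: matrix_mul_assoc add: assms(1))
  also have "\<dots> = B"
    using inv by simp
  finally show ?thesis .
qed

lemma matrix_inv_involution: "(A::'a::semiring_1^'n^'n) ** A = mat 1 \<Longrightarrow> matrix_inv A = A"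
  by (rule matrix_inv_unique)

lemma (in group) finite_index_imp_pow_in_subgroup:
  assumes H: "subgroup H G" and fin: "finite (rcosets H)" and x: "x \<in> carrier G"
  shows "\<exists>k::nat>0. x [^] k \<in> H"
proof -
  have "range (\<lambda>i::nat. H #> x [^] i) \<subseteq> rcosets H"
    using rcosetsI subgroup.subset[OF H] x by auto
  then have "\<not> inj (\<lambda>i::nat. H #> x [^] i)"
    using fin finite_subset finite_imageD infinite_UNIV_nat by blast
  then obtain i j :: nat where "i < j" and eq: "H #> x [^] i = H #> x [^] j"
    unfolding inj_def by (metis linorder_neq_iff)
  then have "x [^] j \<in> H #> x [^] i"
    using repr_independenceD[OF H] x by simp
  then have "x [^] j \<otimes> inv (x [^] i) \<in> H"
    using subgroup.rcos_module_imp[OF H is_group] x by simp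
  moreover have "x [^] j = x [^] (j - i) \<otimes> x [^] i"
    using \<open>i < j\<close> x by (simp add: nat_pow_mult)
  ultimately have "x [^] (j - i) \<in> H"
    using x by (simp add: m_assoc)
  then show ?thesis
    using \<open>i < j\<close> by (intro exI[of _ "j - i"]) simp
qed

lemma acomp_assoc: "acomp (acomp g h) k = acomp g (acomp h k)"
  by (simp add: acomp_def matrix_vector_mul_assoc matrix_vector_right_distrib matrix_mul_assoc add.assoc)

lemma act_acomp: "act (acomp g h) x = act g (act h x)"
  by (simp add: act_def acomp_def matrix_vector_mul_assoc matrix_vector_right_distrib add.assoc)

lemma act_aone: "act aone x = x"
  by (simp add: act_def aone_def)

subsection \<open>Coordinates on the Klein bottle group\<close>

definition parity_sign :: "int \<Rightarrow> int" where
  "parity_sign n = (if even n then 1 else -1)"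

definition kb_refl :: "real^2^2" where
  "kb_refl = vector [vector [-1, 0], vector [0, 1]]"

text \<open>The element \<open>a\<^sup>m b\<^sup>n\<close> of \<open>\<pi>\<close>.\<close>
definition kb_elt :: "int \<Rightarrow> int \<Rightarrow> aff" where
  "kb_elt m n = (vector [real_of_int m, real_of_int n / 2], if even n then mat 1 else kb_refl)"

lemma kb_refl_mult_vec: "kb_refl *v x = vector [- x$1, x$2]"
  by (simp add: vec2_eq_iff kb_refl_def matrix_vector_mult_def sum_2)

lemma kb_refl_involution: "kb_refl ** kb_refl = mat 1"
  by (simp add: mat2_eq_iff kb_refl_def matrix_matrix_mult_def sum_2 mat_def)

lemma kb_refl_neq_one: "kb_refl \<noteq> mat 1"
  by (simp add: kb_refl_def mat2_eq_iff mat_def)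

lemma act_kb_elt: "act (kb_elt m n) x = vector [of_int (parity_sign n) * x$1 + of_int m, x$2 + of_int n / 2]"
  by (simp add: act_def kb_elt_def vec2_eq_iff kb_refl_mult_vec parity_sign_def)

lemma acomp_kb_elt: "acomp (kb_elt m n) (kb_elt m' n') = kb_elt (m + parity_sign n * m') (n + n')"
  by (simp add: acomp_def kb_elt_def parity_sign_def vec2_eq_iff kb_refl_mult_vec kb_refl_involution)

lemma kb_elt_inject: "kb_elt m n = kb_elt m' n' \<longleftrightarrow> m = m' \<and> n = n'"
proof
  assume "kb_elt m n = kb_elt m' n'"
  from arg_cong[OF this, of fst] show "m = m' \<and> n = n'"
    by (simp add: kb_elt_def vec2_eq_iff)
qed simp

lemma aone_eq_kb_elt: "aone = kb_elt 0 0"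
  by (simp add: aone_def kb_elt_def vec2_eq_iff)

lemma gen_a_eq_kb_elt: "gen_a = kb_elt 1 0"
  by (simp add: gen_a_def kb_elt_def vec2_eq_iff)

lemma gen_b_eq_kb_elt: "gen_b = kb_elt 0 1"
  by (simp add: gen_b_def kb_elt_def vec2_eq_iff kb_refl_def)

lemma ainv_gen_a: "ainv gen_a = kb_elt (-1) 0"
  by (simp add: gen_a_eq_kb_elt kb_elt_def ainv_def matrix_inv_involution vec2_eq_iff)

lemma ainv_gen_b: "ainv gen_b = kb_elt 0 (-1)"
  by (simp add: gen_b_eq_kb_elt kb_elt_def ainv_def matrix_inv_involution kb_refl_involution
      kb_refl_mult_vec vec2_eq_iff)

lemma acomp_kb_elt_inverse: "acomp (kb_elt (- parity_sign n * m) (- n)) (kb_elt m n) = aone"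
  by (simp add: acomp_kb_elt aone_eq_kb_elt parity_sign_def)

lemma kb_elt_in_piK: "kb_elt m n \<in> piK"
proof -
  have "kb_elt m 0 \<in> piK"
  proof (induction m rule: int_induct[of _ 0])
    case base show ?case using piK.one by (simp add: aone_eq_kb_elt)
  next
    case (step1 i) then show ?case
      using piK.ma[of "kb_elt i 0"] by (simp add: gen_a_eq_kb_elt acomp_kb_elt parity_sign_def)
  next
    case (step2 i) then show ?case
      using piK.mai[of "kb_elt i 0"] by (simp add: ainv_gen_a acomp_kb_elt parity_sign_def)
  qed
  then show ?thesis
  proof (induction n rule: int_induct[of _ 0])
    case (step1 i) then show ?case
      using piK.mb[of "kb_elt m i"] by (simp add: gen_b_eq_kb_elt acomp_kb_elt)
  next
    case (step2 i) then show ?case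
      using piK.mbi[of "kb_elt m i"] by (simp add: ainv_gen_b acomp_kb_elt)
  qed
qed

lemma piK_iff: "g \<in> piK \<longleftrightarrow> (\<exists>m n. g = kb_elt m n)"
proof
  assume "g \<in> piK"
  then show "\<exists>m n. g = kb_elt m n"
  proof induction
    case one show ?case by (metis aone_eq_kb_elt)
  next
    case (ma g) then show ?case by (metis gen_a_eq_kb_elt acomp_kb_elt)
  next
    case (mai g) then show ?case by (metis ainv_gen_a acomp_kb_elt)
  next
    case (mb g) then show ?case by (metis gen_b_eq_kb_elt acomp_kb_elt)
  next
    case (mbi g) then show ?case by (metis ainv_gen_b acomp_kb_elt)
  qed
qed (auto simp: kb_elt_in_piK)

lemma piTrans_iff: "g \<in> piTrans \<longleftrightarrow> (\<exists>m n. g = kb_elt m n \<and> even n)"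
  using kb_refl_neq_one by (auto simp: piTrans_def piK_iff kb_elt_def)

lemma group_piG: "group piG"
proof (rule groupI)
  fix x assume "x \<in> carrier piG"
  then obtain m n where x: "x = kb_elt m n"
    by (auto simp: piG_def piK_iff)
  show "\<exists>y\<in>carrier piG. y \<otimes>\<^bsub>piG\<^esub> x = \<one>\<^bsub>piG\<^esub>"
    using acomp_kb_elt_inverse kb_elt_in_piK unfolding piG_def x by force
  show "\<one>\<^bsub>piG\<^esub> \<otimes>\<^bsub>piG\<^esub> x = x"
    by (simp add: piG_def x aone_eq_kb_elt acomp_kb_elt parity_sign_def)
next
  fix x y assume "x \<in> carrier piG" "y \<in> carrier piG"
  then show "x \<otimes>\<^bsub>piG\<^esub> y \<in> carrier piG"
    by (clarsimp simp: piG_def piK_iff acomp_kb_elt) blast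
qed (simp_all add: piG_def acomp_assoc piK.one)

lemma pow_vertical_kb_elt: "kb_elt 0 n [^]\<^bsub>piG\<^esub> k = kb_elt 0 (int k * n)"
  by (induction k) (simp_all add: piG_def aone_eq_kb_elt acomp_kb_elt algebra_simps)

subsection \<open>Orbits\<close>

lemma mem_orb_iff: "y \<in> orb x \<longleftrightarrow> (\<exists>m n. y = act (kb_elt m n) x)"
  unfolding orb_def image_iff Bex_def piK_iff by blast

lemma mem_orb_iff_coords:
  "y \<in> orb x \<longleftrightarrow> (\<exists>m n. y$1 = of_int (parity_sign n) * x$1 + of_int m \<and> y$2 = x$2 + of_int n / 2)"
  by (simp add: mem_orb_iff act_kb_elt vec2_eq_iff)

lemma mem_orb_0_iff: "x \<in> orb 0 \<longleftrightarrow> (\<exists>m n. x$1 = of_int m \<and> x$2 = of_int n / 2)"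
  by (simp add: mem_orb_iff_coords)

lemma orb_refl: "x \<in> orb x"
  by (metis act_aone aone_eq_kb_elt mem_orb_iff)

lemma orb_trans: "y \<in> orb x \<Longrightarrow> z \<in> orb y \<Longrightarrow> z \<in> orb x"
  unfolding mem_orb_iff by (metis act_acomp acomp_kb_elt)

lemma orb_sym: "y \<in> orb x \<Longrightarrow> x \<in> orb y"
proof -
  assume "y \<in> orb x"
  then obtain m n where y: "y = act (kb_elt m n) x"
    by (auto simp: mem_orb_iff)
  have "act (kb_elt (- parity_sign n * m) (- n)) y = x"
    by (metis y act_acomp act_aone acomp_kb_elt_inverse)
  then show ?thesis
    by (auto simp: mem_orb_iff)
qed

lemma orb_eq_iff: "orb x = orb y \<longleftrightarrow> y \<in> orb x"
  using orb_refl orb_sym orb_trans by blast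

lemma orb_act: "g \<in> piK \<Longrightarrow> orb (act g x) = orb x"
  by (metis orb_def orb_eq_iff image_eqI)

subsection \<open>The lift \<open>ftilde\<close> defines a 2-valued map\<close>

lemma of_int_neq_half_odd: "odd k \<Longrightarrow> (of_int n :: real) \<noteq> of_int k / 2"
proof
  assume "odd k" "(of_int n :: real) = of_int k / 2"
  then have "2 * n = k"
    by (simp flip: of_int_eq_iff)
  with \<open>odd k\<close> show False
    by presburger
qed

lemma continuous_ftilde: "continuous_on UNIV (ftilde i)"
proof -
  have "ftilde i = (\<lambda>t. \<chi> j. if j = 1 then 0 else t$2 / 2 - (if i = 1 then 0 else 1/4))"
    by (auto simp: ftilde_def vec2_eq_iff)
  moreover have "continuous_on UNIV (\<lambda>t::real^2. if j = 1 then 0 else t$2 / 2 - (if i = 1 then 0 else 1/4))"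
    for j :: 2
    by (cases "j = 1") (auto intro!: continuous_intros)
  ultimately show ?thesis
    by (simp add: continuous_on_vec_lambda)
qed

lemma in_F2_ftilde: "in_F2 ftilde"
  unfolding in_F2_def
proof
  fix x
  show "orb (ftilde 1 x) \<noteq> orb (ftilde 2 x)"
  proof
    assume "orb (ftilde 1 x) = orb (ftilde 2 x)"
    then obtain n where "x$2 / 2 - 1/4 = x$2 / 2 + of_int n / (2::real)"
      by (auto simp: orb_eq_iff mem_orb_iff_coords ftilde_def)
    then have "(of_int n :: real) = of_int (-1) / 2"
      by simp
    then show False
      using of_int_neq_half_odd[of "-1" n] by simp
  qed
qed

lemma induced_ftilde_ex: "\<gamma> \<in> piK \<Longrightarrow> \<exists>\<phi> \<sigma>. induced ftilde \<gamma> \<phi> \<sigma>"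
proof -
  assume "\<gamma> \<in> piK"
  then obtain m n where \<gamma>: "\<gamma> = kb_elt m n"
    by (auto simp: piK_iff)
  show ?thesis
  proof (cases "even n")
    case True
    then obtain k where n: "n = 2 * k" by blast
    have "induced ftilde \<gamma> (\<lambda>_. kb_elt 0 k) id"
      unfolding induced_def using kb_elt_in_piK
      by (auto simp: \<gamma> n act_kb_elt ftilde_def vec2_eq_iff permutes_id)
    then show ?thesis by blast
  next
    case False
    then obtain k where n: "n = 2 * k + 1"
      by (metis odd_two_times_div_two_succ)
    have "induced ftilde \<gamma> (\<lambda>i. if i = 1 then kb_elt 0 (k + 1) else kb_elt 0 k) (Transposition.transpose 1 2)"
      unfolding induced_def using kb_elt_in_piK
      by (auto simp: \<gamma> n act_kb_elt ftilde_def vec2_eq_iff permutes_swap_id Transposition.transpose_def add_divide_distrib)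
    then show ?thesis by blast
  qed
qed

lemma wd_2valued_ftilde: "wd_2valued ftilde"
  unfolding wd_2valued_def using continuous_ftilde in_F2_ftilde induced_ftilde_ex by blast

subsection \<open>Fixed points and fixed point classes\<close>

lemma mv_orb:
  assumes "wd_2valued F"
  shows "mv F (orb x) = {orb (F 1 x), orb (F 2 x)}"
  unfolding mv_def
proof (rule some_equality)
  fix S assume "\<exists>x'. orb x = orb x' \<and> S = {orb (F 1 x'), orb (F 2 x')}"
  then obtain x' where "x' \<in> orb x" and S: "S = {orb (F 1 x'), orb (F 2 x')}"
    by (auto simp: orb_eq_iff)
  then obtain \<gamma> where "\<gamma> \<in> piK" and x': "x' = act \<gamma> x"
    by (auto simp: orb_def)
  then obtain \<phi> \<sigma> where ind: "induced F \<gamma> \<phi> \<sigma>"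
    using assms by (auto simp: wd_2valued_def)
  then have \<tau>: "inv_into UNIV \<sigma> permutes {1,2}"
    by (simp add: induced_def permutes_inv)
  have "orb (F i x') = orb (F (inv_into UNIV \<sigma> i) x)" if "i \<in> {1,2}" for i
    using ind that by (auto simp: induced_def x' orb_act)
  then have "S = (\<lambda>i. orb (F i x)) ` (inv_into UNIV \<sigma> ` {1,2})"
    by (auto simp: S)
  then show "S = {orb (F 1 x), orb (F 2 x)}"
    by (simp only: permutes_image[OF \<tau>]) simp
qed blast

lemma coincidence_imp_mem_orb_0: "x \<in> orb (ftilde i x) \<Longrightarrow> x \<in> orb 0"
proof -
  assume "x \<in> orb (ftilde i x)"
  then obtain m n where x1: "x$1 = of_int m" and x2: "x$2 = (ftilde i x)$2 + of_int n / 2"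
    by (auto simp: mem_orb_iff_coords ftilde_def)
  show "x \<in> orb 0"
  proof (cases "i = 1")
    case True
    then have "x$2 = of_int (2 * n) / 2"
      using x2 by (simp add: ftilde_def)
    then show ?thesis
      using x1 mem_orb_0_iff by blast
  next
    case False
    then have "x$2 = of_int (2 * n - 1) / 2"
      using x2 by (simp add: ftilde_def field_simps)
    then show ?thesis
      using x1 mem_orb_0_iff by blast
  qed
qed

lemma fixpts_ftilde: "fixpts ftilde = {orb 0}"
proof
  show "fixpts ftilde \<subseteq> {orb 0}"
  proof
    fix q assume "q \<in> fixpts ftilde"
    then obtain x where q: "q = orb x" and "orb x \<in> {orb (ftilde 1 x), orb (ftilde 2 x)}"
      by (auto simp: fixpts_def klein_def mv_orb[OF wd_2valued_ftilde])
    then obtain i where "orb (ftilde i x) = orb x"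
      by blast
    then have "x \<in> orb 0"
      by (simp add: orb_eq_iff coincidence_imp_mem_orb_0)
    then show "q \<in> {orb 0}"
      by (simp add: q orb_eq_iff orb_sym)
  qed
  have "ftilde 1 0 = 0"
    by (simp add: ftilde_def vec2_eq_iff)
  then show "{orb 0} \<subseteq> fixpts ftilde"
    by (auto simp: fixpts_def klein_def mv_orb[OF wd_2valued_ftilde])
qed

lemma orb_liftFix_ftilde:
  assumes "x \<in> liftFix ftilde \<gamma> i" "\<gamma> \<in> piK"
  shows "orb x = orb 0"
proof -
  have "x \<in> orb (ftilde i x)"
    using assms unfolding liftFix_def orb_def by force
  then show ?thesis
    by (simp add: coincidence_imp_mem_orb_0 orb_eq_iff orb_sym)
qed

lemma liftFix_ftilde_aone_1: "liftFix ftilde aone 1 = {0}"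
  by (auto simp: liftFix_def act_aone ftilde_def vec2_eq_iff)

lemma fp_classes_ftilde: "fp_classes ftilde = {{orb 0}}"
proof
  show "fp_classes ftilde \<subseteq> {{orb 0}}"
    unfolding fp_classes_def using orb_liftFix_ftilde by blast
  have "orb ` liftFix ftilde aone 1 = {orb 0}"
    using liftFix_ftilde_aone_1 by simp
  then show "{{orb 0}} \<subseteq> fp_classes ftilde"
    unfolding fp_classes_def using piK.one by blast
qed

subsection \<open>The fixed point index\<close>

declare One_nat_def [simp del]

text \<open>The linear map \<open>diag(1, c)\<close> of the plane, radially projected back to the circle; points of
  \<open>S\<^sup>1\<close> are the functions \<open>x :: nat \<Rightarrow> real\<close> of \<open>nsphere 1\<close>.\<close>
definition circle_stretch :: "real \<Rightarrow> (nat \<Rightarrow> real) \<Rightarrow> nat \<Rightarrow> real" where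
  "circle_stretch c x = (\<lambda>k. if k = 0 then x 0 / sqrt ((x 0)^2 + (c * x 1)^2)
     else if k = 1 then c * x 1 / sqrt ((x 0)^2 + (c * x 1)^2) else 0)"

lemma topspace_nsphere_1:
  "x \<in> topspace (nsphere 1) \<longleftrightarrow> (x 0)^2 + (x 1)^2 = 1 \<and> (\<forall>i>1. x i = 0)"
proof -
  have "(\<Sum>i\<le>1::nat. (x i)^2) = (x 0)^2 + (x 1)^2"
    by (simp add: One_nat_def)
  then show ?thesis
    unfolding nsphere by simp
qed

lemma stretch_norm_pos: "c \<noteq> 0 \<Longrightarrow> (x 0)^2 + (x 1)^2 = 1 \<Longrightarrow> (x 0)^2 + (c * x 1)^2 > (0::real)"
  by (smt (verit, best) mult_eq_0_iff power_zero_numeral sum_power2_gt_zero_iff)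

lemma circle_stretch_in_nsphere:
  assumes c: "c \<noteq> 0" and x: "x \<in> topspace (nsphere 1)"
  shows "circle_stretch c x \<in> topspace (nsphere 1)"
proof -
  define D where "D = sqrt ((x 0)^2 + (c * x 1)^2)"
  have "D > 0"
    unfolding D_def
    by (intro real_sqrt_gt_zero stretch_norm_pos[OF c]) (use x in \<open>simp add: topspace_nsphere_1\<close>)
  have "(circle_stretch c x 0)^2 + (circle_stretch c x 1)^2 = ((x 0)^2 + (c * x 1)^2) / D^2"
    by (simp add: circle_stretch_def power_divide add_divide_distrib flip: D_def)
  also have "\<dots> = 1"
  proof -
    have "(x 0)^2 + (c * x 1)^2 = D^2"
      by (simp add: D_def)
    then show ?thesis
      using \<open>D > 0\<close> by simp
  qed
  finally show ?thesis
    by (simp add: topspace_nsphere_1 circle_stretch_def)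
qed

lemma continuous_map_circle_stretch:
  assumes c: "c \<noteq> 0"
  shows "continuous_map (nsphere 1) (nsphere 1) (circle_stretch c)"
proof -
  have nz: "sqrt ((x 0)^2 + (c * x 1)^2) \<noteq> 0" if "x \<in> topspace (nsphere 1)" for x
  proof -
    have "sqrt ((x 0)^2 + (c * x 1)^2) > 0"
      by (intro real_sqrt_gt_zero stretch_norm_pos[OF c]) (use that in \<open>simp add: topspace_nsphere_1\<close>)
    then show ?thesis
      by linarith
  qed
  have "continuous_map (nsphere 1) euclideanreal (\<lambda>x. circle_stretch c x k)" for k
    unfolding circle_stretch_def
    by (cases "k = 0"; cases "k = 1")
      (auto intro!: continuous_intros continuous_map_nsphere_projection nz)
  then have "continuous_map (nsphere 1) (powertop_real UNIV) (circle_stretch c)"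
    by (simp add: continuous_map_componentwise_UNIV)
  then show ?thesis
    using circle_stretch_in_nsphere[OF c] unfolding nsphere
    by (simp add: continuous_map_in_subtopology image_subset_iff)
qed

lemma circle_stretch_inverse:
  assumes c: "c \<noteq> 0" and x: "x \<in> topspace (nsphere 1)"
  shows "circle_stretch (1/c) (circle_stretch c x) = x"
proof
  fix k
  have s1: "(x 0)^2 + (x 1)^2 = 1" and z: "\<forall>i>1. x i = 0"
    using x by (simp_all add: topspace_nsphere_1)
  define D where "D = sqrt ((x 0)^2 + (c * x 1)^2)"
  have "D > 0"
    unfolding D_def using stretch_norm_pos[OF c s1] by simp
  define y where "y = circle_stretch c x"
  have y0: "y 0 = x 0 / D" and y1: "y 1 = c * x 1 / D"
    by (simp_all add: y_def circle_stretch_def D_def)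
  have "(y 0)^2 + (1/c * y 1)^2 = ((x 0)^2 + (x 1)^2) / D^2"
    using c by (simp add: y0 y1 power_divide add_divide_distrib)
  then have "sqrt ((y 0)^2 + (1/c * y 1)^2) = 1/D"
    using \<open>D > 0\<close> by (simp add: s1 real_sqrt_divide)
  then show "circle_stretch (1/c) y k = x k"
    using \<open>D > 0\<close> c z y0 y1 by (auto simp: circle_stretch_def)
qed

lemma Brouwer_degree2_circle_stretch: "c \<noteq> 0 \<Longrightarrow> \<bar>Brouwer_degree2 1 (circle_stretch c)\<bar> = 1"
  by (rule Brouwer_degree2_homeomorphic_maps[of 1 _ "circle_stretch (1/c)"])
    (use circle_stretch_inverse[of "1/c"] in
      \<open>simp_all add: homeomorphic_maps_def continuous_map_circle_stretch circle_stretch_inverse\<close>)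

lemma fp_index_eqI:
  assumes "\<And>r. 0 < r \<Longrightarrow> circ_map g x0 r = h"
  shows "fp_index g x0 = Brouwer_degree2 1 h"
  unfolding fp_index_def
proof (rule the_equality)
  show "\<exists>e>0. \<forall>r. 0 < r \<and> r < e \<longrightarrow> Brouwer_degree2 1 (circ_map g x0 r) = Brouwer_degree2 1 h"
    using assms by (intro exI[of _ 1]) simp
next
  fix d assume "\<exists>e>0. \<forall>r. 0 < r \<and> r < e \<longrightarrow> Brouwer_degree2 1 (circ_map g x0 r) = d"
  then obtain e where "e > 0" and "\<forall>r. 0 < r \<and> r < e \<longrightarrow> Brouwer_degree2 1 (circ_map g x0 r) = d"
    by blast
  then have "Brouwer_degree2 1 (circ_map g x0 (e/2)) = d"
    by simp
  then show "d = Brouwer_degree2 1 h"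
    using assms \<open>e > 0\<close> by simp
qed

lemma circ_map_ftilde:
  assumes r: "r > 0"
  shows "circ_map (\<lambda>y. act aone (ftilde 1 y)) 0 r = circle_stretch (1/2)"
proof
  fix u :: "nat \<Rightarrow> real"
  define w :: "real^2" where "w = r *\<^sub>R vector [u 0, u 1] - act aone (ftilde 1 (r *\<^sub>R vector [u 0, u 1]))"
  have w1: "w$1 = r * u 0" and w2: "w$2 = r * (1/2 * u 1)"
    by (simp_all add: w_def act_aone ftilde_def)
  have "norm w = sqrt (r^2 * ((u 0)^2 + (1/2 * u 1)^2))"
    by (simp add: norm_vec_def L2_set_def sum_2 w1 w2 power_mult_distrib power_divide algebra_simps)
  also have "\<dots> = r * sqrt ((u 0)^2 + (1/2 * u 1)^2)"
    using r by (simp add: real_sqrt_mult)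
  finally have "norm w = r * sqrt ((u 0)^2 + (1/2 * u 1)^2)" .
  then show "circ_map (\<lambda>y. act aone (ftilde 1 y)) 0 r u = circle_stretch (1/2) u"
    unfolding circ_map_def Let_def
    using r by (simp add: w_def[symmetric] w1 w2 circle_stretch_def fun_eq_iff)
qed

lemma essential_orb_0: "essential ftilde {orb 0}"
  unfolding essential_def
proof (intro bexI conjI)
  show "{orb 0} = orb ` liftFix ftilde aone 1"
    by (simp add: liftFix_ftilde_aone_1)
  have "act aone (ftilde 1 y) = y \<longleftrightarrow> y = 0" for y
    using liftFix_ftilde_aone_1 unfolding liftFix_def by blast
  then show "\<forall>x\<in>liftFix ftilde aone 1. isolated_fp (\<lambda>y. act aone (ftilde 1 y)) x"
    unfolding liftFix_ftilde_aone_1 isolated_fp_def by (auto intro: exI[of _ 1])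
  have "(SOME x. x \<in> liftFix ftilde aone 1 \<and> orb x = orb 0) = 0"
    unfolding liftFix_ftilde_aone_1 by (rule some_equality) auto
  moreover have "fp_index (\<lambda>y. act aone (ftilde 1 y)) 0 \<noteq> 0"
    using Brouwer_degree2_circle_stretch[of "1/2"] by (simp add: fp_index_eqI circ_map_ftilde)
  ultimately show "(\<Sum>q\<in>{orb 0}. fp_index (\<lambda>y. act aone (ftilde 1 y))
      (SOME x. x \<in> liftFix ftilde aone 1 \<and> orb x = q)) \<noteq> 0"
    by simp
qed (simp_all add: piK.one)

subsection \<open>No lift to a finite cover by a torus\<close>

lemma induced_ftilde_vertical:
  assumes "induced ftilde (kb_elt 0 (2 * k)) \<phi> \<sigma>"
  shows "\<phi> 1 = kb_elt 0 k"
proof -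
  obtain m n where \<phi>: "\<phi> 1 = kb_elt m n"
    using assms by (auto simp: induced_def piK_iff)
  let ?j = "inv_into UNIV \<sigma> 1"
  have "ftilde 1 (act (kb_elt 0 (2 * k)) 0) = act (kb_elt m n) (ftilde ?j 0)"
    using assms \<phi> by (simp add: induced_def)
  then have eq: "vector [0, of_int k / 2] = act (kb_elt m n) (ftilde ?j 0)"
    by (simp add: act_kb_elt ftilde_def)
  have "?j = 1"
  proof (rule ccontr)
    assume "?j \<noteq> 1"
    then have "(of_int n :: real) = of_int (2 * k + 1) / 2"
      using eq by (simp add: act_kb_elt ftilde_def vec2_eq_iff field_simps)
    then show False
      using of_int_neq_half_odd[of "2 * k + 1" n] by simp
  qed
  then have "m = 0 \<and> n = k"
    using eq by (simp add: act_kb_elt ftilde_def vec2_eq_iff)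
  then show ?thesis
    using \<phi> by simp
qed

lemma vertical_translation_not_in_lift_subgroup:
  assumes "N \<subseteq> piTrans"
    and lift: "\<forall>\<gamma>\<in>N. \<exists>\<phi> \<sigma>. induced ftilde \<gamma> \<phi> \<sigma> \<and> \<phi> 1 \<in> N"
  shows "kb_elt 0 (2 * int k) \<in> N \<Longrightarrow> k = 0"
proof (induction k rule: less_induct)
  case (less k)
  then have "kb_elt 0 (int k) \<in> N"
    using lift induced_ftilde_vertical by metis
  then have "even k"
    using assms by (force simp: piTrans_iff kb_elt_inject)
  then obtain k' where k: "k = 2 * k'"
    by (rule evenE)
  with \<open>kb_elt 0 (int k) \<in> N\<close> have "k' < k \<Longrightarrow> k' = 0"
    using less.IH[of k'] by simp
  with k show "k = 0"
    by linarith
qed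

theorem mainTheorem7:
  shows "wd_2valued ftilde \<and> nielsen ftilde = 1 \<and> card (fixpts ftilde) = 1 \<and>
    \<not> (\<exists>N. subgroup N piG \<and> N \<subseteq> piTrans \<and> finite (rcosets\<^bsub>piG\<^esub> N) \<and>
          (\<forall>\<gamma>\<in>N. \<exists>\<phi> \<sigma>. induced ftilde \<gamma> \<phi> \<sigma> \<and> \<phi> 1 \<in> N \<and> \<phi> 2 \<in> N))"
proof (intro conjI notI)
  show "wd_2valued ftilde"
    by (rule wd_2valued_ftilde)
  have "{C \<in> fp_classes ftilde. essential ftilde C} = {{orb 0}}"
    using essential_orb_0 by (auto simp: fp_classes_ftilde)
  then show "nielsen ftilde = 1"
    by (simp add: nielsen_def)
  show "card (fixpts ftilde) = 1"
    by (simp add: fixpts_ftilde)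
next
  assume "\<exists>N. subgroup N piG \<and> N \<subseteq> piTrans \<and> finite (rcosets\<^bsub>piG\<^esub> N) \<and>
          (\<forall>\<gamma>\<in>N. \<exists>\<phi> \<sigma>. induced ftilde \<gamma> \<phi> \<sigma> \<and> \<phi> 1 \<in> N \<and> \<phi> 2 \<in> N)"
  then obtain N where N: "subgroup N piG" "N \<subseteq> piTrans" "finite (rcosets\<^bsub>piG\<^esub> N)"
    and lift: "\<forall>\<gamma>\<in>N. \<exists>\<phi> \<sigma>. induced ftilde \<gamma> \<phi> \<sigma> \<and> \<phi> 1 \<in> N"
    by blast
  have "kb_elt 0 2 \<in> carrier piG"
    by (simp add: piG_def kb_elt_in_piK)
  then obtain k :: nat where "k > 0" "kb_elt 0 2 [^]\<^bsub>piG\<^esub> k \<in> N"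
    using group.finite_index_imp_pow_in_subgroup[OF group_piG N(1) N(3)] by blast
  then show False
    using vertical_translation_not_in_lift_subgroup[OF N(2) lift, of k]
    by (simp add: pow_vertical_kb_elt mult.commute)
qed

end
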